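(* Consider an implication of canonical form $(\ast)$ and an environment $\eta$, and let $n\ge\max\{2,M_1,\dots,M_M\}$. If the implication is $n$-ary $\eta$-valid, then the Parametricity Condition holds for it and $\eta$.
   Context: $\mathsf{Heap}$: finite partial functions $\mathsf{PosInt}\to\mathsf{Int}$; $g\sqsubseteq h$ means $h$ extends $g$; $h\cdot g$ union of disjoint heaps; componentwise on $\mathsf{Heap}^n$. $\mathsf{IRel}_n$: upward closed subsets of $\mathsf{Heap}^n$; $p*q=\{\mathbf f\cdot\mathbf g\mid\mathbf f\in p,\mathbf g\in q,\text{componentwise disjoint}\}$; $\Delta_n(X)=\{(h_1,\dots,h_n)\mid\exists f\in X.\ \forall k.\ f\sqsubseteq h_k\}$. Assertions: built from primitive assertions $P$, assertion variables, $\mathsf{true},\mathsf{false},\wedge,\vee,*$, quantifiers over integer variables. $n$-ary meaning under $\eta$ and $\rho:\mathsf{AVar}\to\mathsf{IRel}_n$: $[\![P]\!]^n=\Delta_n([\![P]\!]^{\mathrm{prim}}_\eta)$, $[\![a]\!]^n=\rho(a)$, connectives by $\mathsf{Heap}^n,\emptyset,\cap,\cup,*$, quantifiers by unions/intersections. $n$-ary $\eta$-validity of $\varphi\Rightarrow\psi$: $[\![\varphi]\!]^n_{\eta,\rho}\subseteq[\![\psi]\!]^n_{\eta,\rho}$ for all $\rho:\mathsf{AVar}\to\mathsf{IRel}_n$. Canonical form $(\ast)$: $\bigwedge_{i=1}^M\varphi_i*a_{i,1}*\cdots*a_{i,M_i}\Rightarrow\bigvee_{j=1}^N\psi_j*b_{j,1}*\cdots*b_{j,N_j}$,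 $M\ge1$, $N\ge0$, $\varphi_i,\psi_j$ free of assertion variables, every $b_{j,k}$ among the $a_{i,k}$. $V=\{a_{i,k}\}$; $\Pi(i)(c)=|\{k\mid a_{i,k}=c\}|$, $\Omega(j)(c)=|\{k\mid b_{j,k}=c\}|$; $\Pi(i)\ge\Omega(j)$ iff $\Pi(i)(c)\ge\Omega(j)(c)$ for all $c\in V$. Disjunct $j$ is empty if $N_j=0$. Parametricity Condition: for all $h,h_1,\dots,h_M\in\mathsf{Heap}$ with $h_i\sqsubseteq h$ and $h_i\in[\![\varphi_i]\!]^1_\eta$ for all $i$, either (1) there are $i,j$ with $h_i\in[\![\psi_j]\!]^1_\eta$ and $\Pi(i)\ge\Omega(j)$, or (2) there is an empty disjunct $j$ with $h\in[\![\psi_j]\!]^1_\eta$. *)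

theory Defs
  imports Main
begin

type_synonym heap = "int \<rightharpoonup> int"

definition Heap :: "heap set" where
  "Heap = {h. finite (dom h) \<and> dom h \<subseteq> {0<..}}"

definition Heapn :: "nat \<Rightarrow> heap list set" where
  "Heapn n = {hs. length hs = n \<and> set hs \<subseteq> Heap}"

definition tup_le :: "heap list \<Rightarrow> heap list \<Rightarrow> bool" where
  "tup_le f g \<longleftrightarrow> length f = length g \<and> (\<forall>k<length f. f ! k \<subseteq>\<^sub>m g ! k)"

definition IRel :: "nat \<Rightarrow> heap list set set" where
  "IRel n = {p. p \<subseteq> Heapn n \<and> (\<forall>f\<in>p. \<forall>g\<in>Heapn n. tup_le f g \<longrightarrow> g \<in> p)}"

definition hstar :: "heap list set \<Rightarrow> heap list set \<Rightarrow> heap list set" where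
  "hstar p q = {map2 (++) f g | f g. f \<in> p \<and> g \<in> q \<and> length f = length g \<and>
      (\<forall>k<length f. dom (f ! k) \<inter> dom (g ! k) = {})}"

definition Delta :: "nat \<Rightarrow> heap set \<Rightarrow> heap list set" where
  "Delta n X = {hs \<in> Heapn n. \<exists>f\<in>X. \<forall>k<n. f \<subseteq>\<^sub>m hs ! k}"

text \<open>'p: primitive assertions, 'a: assertion variables, 'v: integer variables.\<close>
datatype ('p, 'a, 'v) assn =
    Prim 'p
  | AVar 'a
  | ATrue
  | AFalse
  | AAnd "('p, 'a, 'v) assn" "('p, 'a, 'v) assn"
  | AOr "('p, 'a, 'v) assn" "('p, 'a, 'v) assn"
  | AStar "('p, 'a, 'v) assn" "('p, 'a, 'v) assn"
  | AEx 'v "('p, 'a, 'v) assn"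
  | AAll 'v "('p, 'a, 'v) assn"

fun avars :: "('p, 'a, 'v) assn \<Rightarrow> 'a set" where
  "avars (Prim P) = {}"
| "avars (AVar a) = {a}"
| "avars ATrue = {}"
| "avars AFalse = {}"
| "avars (AAnd x y) = avars x \<union> avars y"
| "avars (AOr x y) = avars x \<union> avars y"
| "avars (AStar x y) = avars x \<union> avars y"
| "avars (AEx v x) = avars x"
| "avars (AAll v x) = avars x"

text \<open>n-ary semantics. I P eta is the primitive meaning of P under the environment eta.\<close>
fun sem :: "('p \<Rightarrow> ('v \<Rightarrow> int) \<Rightarrow> heap set) \<Rightarrow> nat \<Rightarrow> ('v \<Rightarrow> int) \<Rightarrow> ('a \<Rightarrow> heap list set)
             \<Rightarrow> ('p, 'a, 'v) assn \<Rightarrow> heap list set" where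
  "sem I n \<eta> \<rho> (Prim P) = Delta n (I P \<eta>)"
| "sem I n \<eta> \<rho> (AVar a) = \<rho> a"
| "sem I n \<eta> \<rho> ATrue = Heapn n"
| "sem I n \<eta> \<rho> AFalse = {}"
| "sem I n \<eta> \<rho> (AAnd x y) = sem I n \<eta> \<rho> x \<inter> sem I n \<eta> \<rho> y"
| "sem I n \<eta> \<rho> (AOr x y) = sem I n \<eta> \<rho> x \<union> sem I n \<eta> \<rho> y"
| "sem I n \<eta> \<rho> (AStar x y) = hstar (sem I n \<eta> \<rho> x) (sem I n \<eta> \<rho> y)"
| "sem I n \<eta> \<rho> (AEx x \<phi>) = (\<Union>v. sem I n (\<eta>(x := v)) \<rho> \<phi>)"
| "sem I n \<eta> \<rho> (AAll x \<phi>) = (\<Inter>v. sem I n (\<eta>(x := v)) \<rho> \<phi>)"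

text \<open>Unary meaning of an assertion free of assertion variables, as a set of heaps
  (the choice of rho is irrelevant for such assertions; we use the empty relation).\<close>
definition sem1 :: "('p \<Rightarrow> ('v \<Rightarrow> int) \<Rightarrow> heap set) \<Rightarrow> ('v \<Rightarrow> int) \<Rightarrow> ('p, 'a, 'v) assn \<Rightarrow> heap set" where
  "sem1 I \<eta> \<phi> = {h. [h] \<in> sem I 1 \<eta> (\<lambda>_. {}) \<phi>}"

definition valid :: "('p \<Rightarrow> ('v \<Rightarrow> int) \<Rightarrow> heap set) \<Rightarrow> nat \<Rightarrow> ('v \<Rightarrow> int)
                      \<Rightarrow> ('p, 'a, 'v) assn \<Rightarrow> ('p, 'a, 'v) assn \<Rightarrow> bool" where
  "valid I n \<eta> \<phi> \<psi> \<longleftrightarrow> (\<forall>\<rho>. (\<forall>a. \<rho> a \<in> IRel n) \<longrightarrow> sem I n \<eta> \<rho> \<phi> \<subseteq> sem I n \<eta> \<rho> \<psi>)"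

definition star_chain :: "('p, 'a, 'v) assn \<Rightarrow> 'a list \<Rightarrow> ('p, 'a, 'v) assn" where
  "star_chain \<phi> as = foldl (\<lambda>acc a. AStar acc (AVar a)) \<phi> as"

fun big_and :: "('p, 'a, 'v) assn list \<Rightarrow> ('p, 'a, 'v) assn" where
  "big_and [] = ATrue"
| "big_and [x] = x"
| "big_and (x # y # xs) = AAnd x (big_and (y # xs))"

fun big_or :: "('p, 'a, 'v) assn list \<Rightarrow> ('p, 'a, 'v) assn" where
  "big_or [] = AFalse"
| "big_or [x] = x"
| "big_or (x # y # xs) = AOr x (big_or (y # xs))"

text \<open>An implication in canonical form is given by the list L of pairs (phi_i, [a_i1,...,a_iMi])
  (i = 1..M) and the list R of pairs (psi_j, [b_j1,...,b_jNj]) (j = 1..N).\<close>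
definition canon_lhs :: "(('p, 'a, 'v) assn \<times> 'a list) list \<Rightarrow> ('p, 'a, 'v) assn" where
  "canon_lhs L = big_and (map (\<lambda>(\<phi>, as). star_chain \<phi> as) L)"

definition canon_rhs :: "(('p, 'a, 'v) assn \<times> 'a list) list \<Rightarrow> ('p, 'a, 'v) assn" where
  "canon_rhs R = big_or (map (\<lambda>(\<psi>, bs). star_chain \<psi> bs) R)"

definition Vset :: "(('p, 'a, 'v) assn \<times> 'a list) list \<Rightarrow> 'a set" where
  "Vset L = (\<Union>(\<phi>, as)\<in>set L. set as)"

definition canonical :: "(('p, 'a, 'v) assn \<times> 'a list) list \<Rightarrow> (('p, 'a, 'v) assn \<times> 'a list) list \<Rightarrow> bool" where
  "canonical L R \<longleftrightarrow> L \<noteq> [] \<and>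
     (\<forall>(\<phi>, as)\<in>set L. avars \<phi> = {}) \<and>
     (\<forall>(\<psi>, bs)\<in>set R. avars \<psi> = {} \<and> set bs \<subseteq> Vset L)"

text \<open>Occurrence count c in a list of variables (used for Pi(i)(c) and Omega(j)(c)).\<close>
definition occ :: "'a list \<Rightarrow> 'a \<Rightarrow> nat" where
  "occ xs c = length (filter (\<lambda>x. x = c) xs)"

definition dominates :: "(('p, 'a, 'v) assn \<times> 'a list) list \<Rightarrow> 'a list \<Rightarrow> 'a list \<Rightarrow> bool" where
  "dominates L as bs \<longleftrightarrow> (\<forall>c\<in>Vset L. occ as c \<ge> occ bs c)"

definition parametricity_condition ::
  "('p \<Rightarrow> ('v \<Rightarrow> int) \<Rightarrow> heap set) \<Rightarrow> ('v \<Rightarrow> int)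
   \<Rightarrow> (('p, 'a, 'v) assn \<times> 'a list) list \<Rightarrow> (('p, 'a, 'v) assn \<times> 'a list) list \<Rightarrow> bool" where
  "parametricity_condition I \<eta> L R \<longleftrightarrow>
     (\<forall>h \<in> Heap. \<forall>hs. length hs = length L \<and> set hs \<subseteq> Heap \<and>
        (\<forall>i<length L. hs ! i \<subseteq>\<^sub>m h \<and> hs ! i \<in> sem1 I \<eta> (fst (L ! i))) \<longrightarrow>
        (\<exists>i<length L. \<exists>j<length R. hs ! i \<in> sem1 I \<eta> (fst (R ! j)) \<and>
            dominates L (snd (L ! i)) (snd (R ! j)))
        \<or> (\<exists>j<length R. snd (R ! j) = [] \<and> h \<in> sem1 I \<eta> (fst (R ! j))))"

end

theory Submission
  imports Defs "HOL-Library.Nat_Bijection"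
begin

(* Let h and heaps h_i \<sqsubseteq> h with h_i \<in> [[phi_i]] be given.  We build one n-ary
   tuple H (with B = h restricted to the union U of the h_i; component 0 is B plus fresh "tag"
   addresses, the other components are B) and an interpretation var_rel of the assertion
   variables such that H satisfies every conjunct phi_i * a_i1 * ... * a_iMi of the left-hand
   side: the k-th variable of row i gets the "piece" of H consisting of U - dom h_i in
   component k together with a set of tags T i k in component 0.  By validity H satisfies some
   disjunct psi_j * b_j1 * ... * b_jNj.  The tags are chosen so that pieces of different rows
   always overlap and pieces of one row never do; hence the disjoint parts matched to the b's
   come from a single row i and from distinct positions in it, which gives Pi(i) >= Omega(j).
   The psi_j-part, intersected over all components, lies below h (and below h_i if N_j > 0)
   and is a unary model of psi_j. *)

section \<open>Heap tuples\<close>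

lemma Heapn_iff: "X \<in> Heapn n \<longleftrightarrow> length X = n \<and> (\<forall>c<n. X ! c \<in> Heap)"
  by (auto simp: Heapn_def set_conv_nth)

lemma Heap_map_add: "f \<in> Heap \<Longrightarrow> g \<in> Heap \<Longrightarrow> f ++ g \<in> Heap"
  by (auto simp: Heap_def)

lemma Heap_restrict: "f \<in> Heap \<Longrightarrow> f |` A \<in> Heap"
  by (auto simp: Heap_def)

lemma Heap_map_le: "f \<subseteq>\<^sub>m g \<Longrightarrow> g \<in> Heap \<Longrightarrow> f \<in> Heap"
  unfolding Heap_def by (metis (no_types, lifting) map_le_implies_dom_le finite_subset mem_Collect_eq order_trans)

lemma tup_le_refl: "tup_le X X"
  by (simp add: tup_le_def)

lemma tup_le_nth: "tup_le X Y \<Longrightarrow> c < length X \<Longrightarrow> X ! c \<subseteq>\<^sub>m Y ! c"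
  by (simp add: tup_le_def)

lemma tup_le_trans: "tup_le X Y \<Longrightarrow> tup_le Y Z \<Longrightarrow> tup_le X Z"
  unfolding tup_le_def by (metis map_le_trans)

definition tuple_disjoint :: "heap list \<Rightarrow> heap list \<Rightarrow> bool" where
  "tuple_disjoint X Y \<longleftrightarrow> length X = length Y \<and> (\<forall>c<length X. dom (X ! c) \<inter> dom (Y ! c) = {})"

lemma hstar_iff:
  "Z \<in> hstar p q \<longleftrightarrow> (\<exists>f g. Z = map2 (++) f g \<and> f \<in> p \<and> g \<in> q \<and> tuple_disjoint f g)"
  by (auto simp: hstar_def tuple_disjoint_def)

lemma tuple_disjoint_sym: "tuple_disjoint X Y \<Longrightarrow> tuple_disjoint Y X"
  unfolding tuple_disjoint_def by (simp add: Int_commute)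

lemma tuple_disjoint_mono:
  assumes "tup_le X X'" and "tup_le Y Y'" and "tuple_disjoint X' Y'"
  shows "tuple_disjoint X Y"
  unfolding tuple_disjoint_def
proof (intro conjI allI impI)
  show len: "length X = length Y" using assms by (simp add: tup_le_def tuple_disjoint_def)
  fix c assume c: "c < length X"
  have "X ! c \<subseteq>\<^sub>m X' ! c" and "Y ! c \<subseteq>\<^sub>m Y' ! c"
    using assms c len by (simp_all add: tup_le_def)
  moreover have "dom (X' ! c) \<inter> dom (Y' ! c) = {}"
    using assms c by (simp add: tup_le_def tuple_disjoint_def)
  ultimately show "dom (X ! c) \<inter> dom (Y ! c) = {}"
    using map_le_implies_dom_le by blast
qed

lemma tup_le_map2_left:
  assumes "tuple_disjoint f g" shows "tup_le f (map2 (++) f g)"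
  unfolding tup_le_def
proof (intro conjI allI impI)
  show "length f = length (map2 (++) f g)" using assms by (simp add: tuple_disjoint_def)
  fix c assume "c < length f"
  then have "(f ! c) ++ (g ! c) = (g ! c) ++ (f ! c)"
    using assms by (intro map_add_comm) (simp add: tuple_disjoint_def)
  with \<open>c < length f\<close> assms show "f ! c \<subseteq>\<^sub>m map2 (++) f g ! c"
    by (simp add: tuple_disjoint_def)
qed

lemma tup_le_map2_right: "length f = length g \<Longrightarrow> tup_le g (map2 (++) f g)"
  by (simp add: tup_le_def)

lemma map2_Heapn: "f \<in> Heapn n \<Longrightarrow> g \<in> Heapn n \<Longrightarrow> map2 (++) f g \<in> Heapn n"
  by (simp add: Heapn_iff Heap_map_add)

definition restrict_tuple :: "heap list \<Rightarrow> (nat \<Rightarrow> int set) \<Rightarrow> heap list" where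
  "restrict_tuple X S = map (\<lambda>c. (X ! c) |` S c) [0..<length X]"

lemma restrict_tuple_length [simp]: "length (restrict_tuple X S) = length X"
  by (simp add: restrict_tuple_def)

lemma restrict_tuple_nth [simp]: "c < length X \<Longrightarrow> restrict_tuple X S ! c = (X ! c) |` S c"
  by (simp add: restrict_tuple_def)

lemma restrict_tuple_Heapn: "X \<in> Heapn n \<Longrightarrow> restrict_tuple X S \<in> Heapn n"
  by (simp add: Heapn_iff Heap_restrict)

lemma map_le_restrict_compl: "f \<subseteq>\<^sub>m g \<Longrightarrow> dom f \<inter> T = {} \<Longrightarrow> f \<subseteq>\<^sub>m g |` (- T)"
  unfolding map_le_def restrict_map_def by auto

lemma map_add_restrict_compl: "f \<subseteq>\<^sub>m g \<Longrightarrow> g = f ++ g |` (- dom f)"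
proof (rule ext)
  fix x assume "f \<subseteq>\<^sub>m g"
  then show "g x = (f ++ g |` (- dom f)) x"
    by (cases "f x"; cases "g x") (auto simp: map_add_def restrict_map_def map_le_def dom_def)
qed

lemma tup_le_split:
  assumes "tup_le f Y"
  defines "g \<equiv> restrict_tuple Y (\<lambda>c. - dom (f ! c))"
  shows "Y = map2 (++) f g" and "tuple_disjoint f g"
proof -
  have len: "length f = length Y" using assms by (simp add: tup_le_def)
  show "Y = map2 (++) f g"
  proof (rule nth_equalityI)
    fix c assume c: "c < length Y"
    then have "f ! c \<subseteq>\<^sub>m Y ! c" using assms len by (simp add: tup_le_def)
    then show "Y ! c = map2 (++) f g ! c"
      using c len map_add_restrict_compl by (simp add: g_def)
  qed (simp add: g_def len)
  show "tuple_disjoint f g" using len by (auto simp: g_def tuple_disjoint_def)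
qed

lemma restrict_tuple_union:
  assumes "\<And>c. A c \<inter> B c = {}"
  shows "restrict_tuple H (\<lambda>c. A c \<union> B c) = map2 (++) (restrict_tuple H A) (restrict_tuple H B)"
    and "tuple_disjoint (restrict_tuple H A) (restrict_tuple H B)"
proof -
  have "(f |` A') ++ (f |` B') = f |` (A' \<union> B')" for f :: heap and A' B'
    by (auto simp: fun_eq_iff map_add_def restrict_map_def split: option.split)
  then show "restrict_tuple H (\<lambda>c. A c \<union> B c) = map2 (++) (restrict_tuple H A) (restrict_tuple H B)"
    by (intro nth_equalityI) simp_all
  show "tuple_disjoint (restrict_tuple H A) (restrict_tuple H B)"
    using assms by (auto simp: tuple_disjoint_def)
qed

lemma IRel_empty: "(\<lambda>_. {}) a \<in> IRel n"
  by (simp add: IRel_def)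

lemma sem_Heapn: "\<forall>a. \<rho> a \<in> IRel n \<Longrightarrow> sem I n \<eta> \<rho> \<phi> \<subseteq> Heapn n"
proof (induction \<phi> arbitrary: \<eta>)
  case (AStar x y)
  then show ?case by (fastforce simp: hstar_iff intro!: map2_Heapn)
next
  case (AAll v \<phi>)
  then show ?case by fastforce
qed (auto simp: Delta_def IRel_def)

lemma sem_upward_closed:
  assumes \<rho>: "\<forall>a. \<rho> a \<in> IRel n"
  shows "X \<in> sem I n \<eta> \<rho> \<phi> \<Longrightarrow> Y \<in> Heapn n \<Longrightarrow> tup_le X Y \<Longrightarrow> Y \<in> sem I n \<eta> \<rho> \<phi>"
proof (induction \<phi> arbitrary: \<eta> X Y)
  case (Prim P)
  then obtain f where f: "f \<in> I P \<eta>" "\<forall>c<n. f \<subseteq>\<^sub>m X ! c" "length X = n"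
    by (auto simp: Delta_def Heapn_iff)
  then have "\<forall>c<n. f \<subseteq>\<^sub>m Y ! c"
    using Prim.prems(3) by (auto simp: tup_le_def intro: map_le_trans)
  with f(1) Prim.prems(2) show ?case by (auto simp: Delta_def)
next
  case (AVar a)
  then show ?case using \<rho> by (auto simp: IRel_def)
next
  case (AStar x y)
  obtain f g where X: "X = map2 (++) f g" and f: "f \<in> sem I n \<eta> \<rho> x"
    and g: "g \<in> sem I n \<eta> \<rho> y" and fg: "tuple_disjoint f g"
    using AStar.prems(1) by (auto simp: hstar_iff)
  define g' where "g' = restrict_tuple Y (\<lambda>c. - dom (f ! c))"
  have len: "length f = length g" using fg by (simp add: tuple_disjoint_def)
  have fY: "tup_le f Y" using tup_le_trans[OF tup_le_map2_left[OF fg]] AStar.prems(3) X by simp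
  have gY: "tup_le g Y" using tup_le_trans[OF tup_le_map2_right[OF len]] AStar.prems(3) X by simp
  have "tup_le g g'"
    unfolding tup_le_def
  proof (intro conjI allI impI)
    fix c assume c: "c < length g"
    have "dom (g ! c) \<inter> dom (f ! c) = {}" using fg c len by (auto simp: tuple_disjoint_def)
    moreover have "g ! c \<subseteq>\<^sub>m Y ! c" using gY c by (simp add: tup_le_def)
    ultimately have "g ! c \<subseteq>\<^sub>m (Y ! c) |` (- dom (f ! c))"
      using map_le_restrict_compl by blast
    with c gY show "g ! c \<subseteq>\<^sub>m g' ! c" by (simp add: g'_def tup_le_def)
  qed (use gY in \<open>simp add: g'_def tup_le_def\<close>)
  then have "g' \<in> sem I n \<eta> \<rho> y"
    using AStar.IH(2)[OF g] AStar.prems(2) by (simp add: g'_def restrict_tuple_Heapn)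
  then show ?case
    using tup_le_split[OF fY] f by (auto simp: hstar_iff g'_def)
qed auto

section \<open>Assertions without assertion variables\<close>

lemma sem_replicate:
  "avars \<phi> = {} \<Longrightarrow> [h] \<in> sem I 1 \<eta> (\<lambda>_. {}) \<phi> \<Longrightarrow> replicate n h \<in> sem I n \<eta> \<rho> \<phi>"
proof (induction \<phi> arbitrary: \<eta> h)
  case (Prim P)
  then show ?case by (auto simp: Delta_def Heapn_iff)
next
  case ATrue
  then show ?case by (simp add: Heapn_iff)
next
  case (AStar x y)
  obtain f g where fg: "[h] = map2 (++) f g" "f \<in> sem I 1 \<eta> (\<lambda>_. {}) x"
      "g \<in> sem I 1 \<eta> (\<lambda>_. {}) y" "tuple_disjoint f g"
    using AStar.prems(2) unfolding sem.simps hstar_iff by meson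
  have "length f = 1" and "length g = 1"
    using arg_cong[OF fg(1), of length] fg(4) by (auto simp: tuple_disjoint_def)
  then obtain a b where ab: "f = [a]" "g = [b]"
    by (auto simp: length_Suc_conv)
  with fg have h: "h = a ++ b" and disj: "dom a \<inter> dom b = {}"
    by (auto simp: tuple_disjoint_def)
  have "replicate n a \<in> sem I n \<eta> \<rho> x" and "replicate n b \<in> sem I n \<eta> \<rho> y"
    using AStar fg ab by auto
  moreover have "replicate n h = map2 (++) (replicate n a) (replicate n b)"
    using h by (simp add: list_eq_iff_nth_eq)
  moreover have "tuple_disjoint (replicate n a) (replicate n b)"
    using disj by (simp add: tuple_disjoint_def)
  ultimately show ?case unfolding sem.simps hstar_iff by meson
qed auto

lemma sem_lift:
  assumes "\<forall>a. \<rho> a \<in> IRel n" and "avars \<phi> = {}" and "[h] \<in> sem I 1 \<eta> (\<lambda>_. {}) \<phi>"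
    and "X \<in> Heapn n" and "\<forall>c<n. h \<subseteq>\<^sub>m X ! c"
  shows "X \<in> sem I n \<eta> \<rho> \<phi>"
  using sem_upward_closed[OF assms(1) sem_replicate[OF assms(2,3)] assms(4)] assms(4,5)
  by (simp add: tup_le_def Heapn_iff)

text \<open>The common part of the components of a tuple: the largest heap below all of them.\<close>
definition tuple_meet :: "nat \<Rightarrow> heap list \<Rightarrow> heap" where
  "tuple_meet n X = (\<lambda>x. if \<forall>c<n. (X ! c) x = (X ! 0) x then (X ! 0) x else None)"

lemma tuple_meet_le:
  assumes "c < n" shows "tuple_meet n X \<subseteq>\<^sub>m X ! c"
  unfolding map_le_def
proof
  fix x assume "x \<in> dom (tuple_meet n X)"
  then have "tuple_meet n X x \<noteq> None" by blast
  then have agree: "\<forall>c<n. (X ! c) x = (X ! 0) x"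
    by (rule contrapos_np) (auto simp: tuple_meet_def)
  then have "tuple_meet n X x = (X ! 0) x" unfolding tuple_meet_def by (rule if_P)
  also have "(X ! 0) x = (X ! c) x" using agree assms by (rule_tac sym) blast
  finally show "tuple_meet n X x = (X ! c) x" .
qed

lemma tuple_meet_greatest:
  assumes "0 < n" and "\<forall>c<n. g \<subseteq>\<^sub>m X ! c" shows "g \<subseteq>\<^sub>m tuple_meet n X"
  unfolding map_le_def
proof
  fix x assume "x \<in> dom g"
  then have agree: "(X ! c) x = g x" if "c < n" for c
    using assms(2) that by (simp add: map_le_def)
  then have "\<forall>c<n. (X ! c) x = (X ! 0) x" using assms(1) by simp
  then have "tuple_meet n X x = (X ! 0) x" unfolding tuple_meet_def by (rule if_P)
  then show "g x = tuple_meet n X x" using agree[OF assms(1)] by simp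
qed

lemma tuple_meet_Heap: "0 < n \<Longrightarrow> X \<in> Heapn n \<Longrightarrow> tuple_meet n X \<in> Heap"
  using Heap_map_le[OF tuple_meet_le] by (simp add: Heapn_iff)

lemma tuple_meet_map2:
  assumes "0 < n" and "length f = n" and "tuple_disjoint f g"
  shows "dom (tuple_meet n f) \<inter> dom (tuple_meet n g) = {}"
    and "tuple_meet n f ++ tuple_meet n g \<subseteq>\<^sub>m tuple_meet n (map2 (++) f g)"
proof -
  have "dom (tuple_meet n f) \<subseteq> dom (f ! 0)" and "dom (tuple_meet n g) \<subseteq> dom (g ! 0)"
    using assms(1) by (simp_all add: map_le_implies_dom_le tuple_meet_le)
  moreover have "dom (f ! 0) \<inter> dom (g ! 0) = {}"
    using assms by (simp add: tuple_disjoint_def)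
  ultimately show "dom (tuple_meet n f) \<inter> dom (tuple_meet n g) = {}" by blast
  have "tuple_meet n f \<subseteq>\<^sub>m map2 (++) f g ! c" and "tuple_meet n g \<subseteq>\<^sub>m map2 (++) f g ! c"
    if "c < n" for c
    using that assms tup_le_map2_left[OF assms(3)] tup_le_map2_right[of f g]
    by (auto simp: tup_le_def tuple_disjoint_def intro: map_le_trans[OF tuple_meet_le])
  then show "tuple_meet n f ++ tuple_meet n g \<subseteq>\<^sub>m tuple_meet n (map2 (++) f g)"
    using assms(1) by (intro tuple_meet_greatest) (auto intro: map_add_le_mapI)
qed

lemma sem_tuple_meet:
  assumes n: "0 < n" and \<rho>: "\<forall>a. \<rho> a \<in> IRel n"
  shows "avars \<phi> = {} \<Longrightarrow> X \<in> sem I n \<eta> \<rho> \<phi> \<Longrightarrow> [tuple_meet n X] \<in> sem I 1 \<eta> (\<lambda>_. {}) \<phi>"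
proof (induction \<phi> arbitrary: \<eta> X)
  case (Prim P)
  then show ?case using tuple_meet_greatest[OF n] tuple_meet_Heap[OF n]
    by (auto simp: Delta_def Heapn_iff)
next
  case ATrue
  then show ?case using tuple_meet_Heap[OF n] by (simp add: Heapn_iff)
next
  case (AStar x y)
  obtain f g where fg: "X = map2 (++) f g" "f \<in> sem I n \<eta> \<rho> x" "g \<in> sem I n \<eta> \<rho> y"
      "tuple_disjoint f g"
    using AStar.prems(2) by (auto simp: hstar_iff)
  have f: "f \<in> Heapn n" and X: "X \<in> Heapn n"
    using fg(2) AStar.prems(2) sem_Heapn[OF \<rho>] by blast+
  have len: "length f = n" using f by (simp add: Heapn_iff)
  have "[tuple_meet n f] \<in> sem I 1 \<eta> (\<lambda>_. {}) x" and "[tuple_meet n g] \<in> sem I 1 \<eta> (\<lambda>_. {}) y"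
    using AStar fg by auto
  moreover have "tuple_disjoint [tuple_meet n f] [tuple_meet n g]"
    using tuple_meet_map2(1)[OF n len fg(4)] by (simp add: tuple_disjoint_def)
  ultimately have "[tuple_meet n f ++ tuple_meet n g] \<in> sem I 1 \<eta> (\<lambda>_. {}) (AStar x y)"
    unfolding sem.simps hstar_iff by (intro exI[of _ "[tuple_meet n f]"] exI[of _ "[tuple_meet n g]"]) simp
  moreover have "[tuple_meet n X] \<in> Heapn 1"
    using tuple_meet_Heap[OF n X] by (simp add: Heapn_iff)
  moreover have "tup_le [tuple_meet n f ++ tuple_meet n g] [tuple_meet n X]"
    using tuple_meet_map2(2)[OF n len fg(4)] fg(1) by (simp add: tup_le_def)
  ultimately show ?case
    by (rule sem_upward_closed[rotated]) (simp add: IRel_empty)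
qed auto

lemma sem1_upward:
  "[g] \<in> sem I 1 \<eta> (\<lambda>_. {}) \<psi> \<Longrightarrow> g \<subseteq>\<^sub>m g' \<Longrightarrow> g' \<in> Heap \<Longrightarrow> g' \<in> sem1 I \<eta> \<psi>"
  unfolding sem1_def using sem_upward_closed[of "\<lambda>_. {}" 1 "[g]" I \<eta> \<psi> "[g']"]
  by (simp add: IRel_empty Heapn_iff tup_le_def)

section \<open>Canonical implications\<close>

lemma sem_big_and:
  "xs \<noteq> [] \<Longrightarrow> X \<in> sem I n \<eta> \<rho> (big_and xs) \<longleftrightarrow> (\<forall>x\<in>set xs. X \<in> sem I n \<eta> \<rho> x)"
  by (induction xs rule: big_and.induct) auto

lemma sem_big_or: "X \<in> sem I n \<eta> \<rho> (big_or xs) \<longleftrightarrow> (\<exists>x\<in>set xs. X \<in> sem I n \<eta> \<rho> x)"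
  by (induction xs rule: big_or.induct) auto

lemma star_chain_Nil [simp]: "star_chain \<phi> [] = \<phi>"
  by (simp add: star_chain_def)

lemma star_chain_snoc [simp]: "star_chain \<phi> (as @ [a]) = AStar (star_chain \<phi> as) (AVar a)"
  by (simp add: star_chain_def)

lemma star_chain_decompose:
  assumes \<rho>: "\<forall>a. \<rho> a \<in> IRel n"
  shows "X \<in> sem I n \<eta> \<rho> (star_chain \<psi> bs) \<Longrightarrow>
    \<exists>F Gs. F \<in> sem I n \<eta> \<rho> \<psi> \<and> tup_le F X \<and> length Gs = length bs \<and>
      (\<forall>l<length bs. Gs ! l \<in> \<rho> (bs ! l) \<and> tup_le (Gs ! l) X \<and> tuple_disjoint F (Gs ! l)) \<and>
      (\<forall>l<length bs. \<forall>l'<length bs. l \<noteq> l' \<longrightarrow> tuple_disjoint (Gs ! l) (Gs ! l'))"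
proof (induction bs arbitrary: X rule: rev_induct)
  case Nil
  then show ?case by (auto simp: tup_le_refl)
next
  case (snoc b bs)
  obtain Y G where X: "X = map2 (++) Y G" and Y: "Y \<in> sem I n \<eta> \<rho> (star_chain \<psi> bs)"
    and G: "G \<in> \<rho> b" and YG: "tuple_disjoint Y G"
    using snoc.prems by (auto simp: hstar_iff)
  obtain F Gs where F: "F \<in> sem I n \<eta> \<rho> \<psi>" "tup_le F Y" and len: "length Gs = length bs"
    and Gs: "\<forall>l<length bs. Gs ! l \<in> \<rho> (bs ! l) \<and> tup_le (Gs ! l) Y \<and> tuple_disjoint F (Gs ! l)"
    and Gs_disj: "\<forall>l<length bs. \<forall>l'<length bs. l \<noteq> l' \<longrightarrow> tuple_disjoint (Gs ! l) (Gs ! l')"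
    using snoc.IH[OF Y] by blast
  have YX: "tup_le Y X" and GX: "tup_le G X"
    using X YG tup_le_map2_left tup_le_map2_right by (auto simp: tuple_disjoint_def)
  have below_Y_disj: "tuple_disjoint Z G" if "tup_le Z Y" for Z
    using tuple_disjoint_mono[OF that tup_le_refl YG] .
  show ?case
  proof (intro exI[of _ F] exI[of _ "Gs @ [G]"] conjI allI impI)
    show "F \<in> sem I n \<eta> \<rho> \<psi>" "tup_le F X" "length (Gs @ [G]) = length (bs @ [b])"
      using F YX len by (auto intro: tup_le_trans)
  next
    fix l assume "l < length (bs @ [b])"
    then show "(Gs @ [G]) ! l \<in> \<rho> ((bs @ [b]) ! l)" "tup_le ((Gs @ [G]) ! l) X"
      "tuple_disjoint F ((Gs @ [G]) ! l)"
      using Gs G GX YX F(2) len below_Y_disj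
      by (cases "l < length bs"; auto simp: nth_append intro: tup_le_trans)+
  next
    fix l l' assume "l < length (bs @ [b])" "l' < length (bs @ [b])" "l \<noteq> l'"
    then show "tuple_disjoint ((Gs @ [G]) ! l) ((Gs @ [G]) ! l')"
      using Gs Gs_disj len below_Y_disj tuple_disjoint_sym
      by (cases "l < length bs"; cases "l' < length bs") (auto simp: nth_append)
  qed
qed

lemma star_chain_build:
  assumes disj: "\<And>k k' c. k < length as \<Longrightarrow> k' < length as \<Longrightarrow> k \<noteq> k' \<Longrightarrow> S k c \<inter> S k' c = {}"
    and base: "restrict_tuple H (\<lambda>c. - (\<Union>k<length as. S k c)) \<in> sem I n \<eta> \<rho> \<phi>"
    and pieces: "\<And>k. k < length as \<Longrightarrow> restrict_tuple H (S k) \<in> \<rho> (as ! k)"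
  shows "H \<in> sem I n \<eta> \<rho> (star_chain \<phi> as)"
proof -
  define Q where "Q m c = - (\<Union>k\<in>{m..<length as}. S k c)" for m c
  have "restrict_tuple H (Q m) \<in> sem I n \<eta> \<rho> (star_chain \<phi> (take m as))" if "m \<le> length as" for m
    using that
  proof (induction m)
    case 0
    then show ?case using base by (simp add: Q_def atLeast0LessThan)
  next
    case (Suc m)
    then have m: "m < length as" by simp
    have split: "{m..<length as} = insert m {Suc m..<length as}" using m by auto
    have "S m c \<inter> S k c = {}" if "k \<in> {Suc m..<length as}" for k c
      using disj[OF m, of k c] that by simp
    then have "S m c \<inter> (\<Union>k\<in>{Suc m..<length as}. S k c) = {}" for c by blast
    then have disj_Q: "\<And>c. Q m c \<inter> S m c = {}" and Q_Suc: "Q (Suc m) = (\<lambda>c. Q m c \<union> S m c)"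
      unfolding Q_def split by blast+
    have "restrict_tuple H (Q m) \<in> sem I n \<eta> \<rho> (star_chain \<phi> (take m as))"
      using Suc by simp
    then have "restrict_tuple H (Q (Suc m)) \<in> sem I n \<eta> \<rho> (star_chain \<phi> (take m as @ [as ! m]))"
      unfolding star_chain_snoc sem.simps hstar_iff Q_Suc restrict_tuple_union(1)[of "Q m" "S m", OF disj_Q]
      using restrict_tuple_union(2)[of "Q m" "S m", OF disj_Q] pieces[OF m]
      by (intro exI[of _ "restrict_tuple H (Q m)"] exI[of _ "restrict_tuple H (S m)"] conjI) simp_all
    then show ?case using m by (simp add: take_Suc_conv_app_nth)
  qed
  from this[of "length as"] have "restrict_tuple H (Q (length as)) \<in> sem I n \<eta> \<rho> (star_chain \<phi> as)"
    by simp
  moreover have "restrict_tuple H (Q (length as)) = H"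
    by (rule nth_equalityI) (simp_all add: Q_def restrict_map_def)
  ultimately show ?thesis by simp
qed

lemma occ_le_of_injection:
  assumes inj: "inj_on f {..<length bs}"
    and f: "\<And>l. l < length bs \<Longrightarrow> f l < length as \<and> as ! f l = bs ! l"
  shows "occ bs c \<le> occ as c"
proof -
  have "occ bs c = card {l. l < length bs \<and> bs ! l = c}"
    by (simp add: occ_def length_filter_conv_card)
  also have "\<dots> \<le> card {k. k < length as \<and> as ! k = c}"
  proof (rule card_inj_on_le)
    show "inj_on f {l. l < length bs \<and> bs ! l = c}" using inj by (rule inj_on_subset) auto
    show "f ` {l. l < length bs \<and> bs ! l = c} \<subseteq> {k. k < length as \<and> as ! k = c}" using f by auto
  qed simp
  also have "\<dots> = occ as c"
    by (simp add: occ_def length_filter_conv_card)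
  finally show ?thesis .
qed


section \<open>Tags\<close>

text \<open>Fresh addresses used to tag the pieces of the model built below: tags of pieces
  in the same row are disjoint, tags of pieces in different rows always meet.\<close>
definition separating_tags :: "nat \<Rightarrow> nat \<Rightarrow> int set \<Rightarrow> (nat \<Rightarrow> nat \<Rightarrow> int set) \<Rightarrow> bool" where
  "separating_tags M n D T \<longleftrightarrow>
     (\<forall>i k. finite (T i k) \<and> T i k \<subseteq> {0<..} \<and> T i k \<inter> D = {}) \<and>
     (\<forall>i<M. \<forall>k<n. T i k \<noteq> {}) \<and>
     (\<forall>i k k'. k \<noteq> k' \<longrightarrow> T i k \<inter> T i k' = {}) \<and>
     (\<forall>i<M. \<forall>i'<M. \<forall>k<n. \<forall>k'<n. i \<noteq> i' \<longrightarrow> T i k \<inter> T i' k' \<noteq> {})"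

text \<open>Tag the position \<open>(i, k)\<close> with the codes of all pairs of grid positions containing it
  that are either diagonal or lie in different rows.\<close>
lemma separating_tags_exist:
  assumes "finite D"
  shows "\<exists>T. separating_tags M n D T"
proof -
  define base where "base = Max (insert 0 D)"
  define code :: "(nat \<times> nat) \<times> (nat \<times> nat) \<Rightarrow> int"
    where "code pq = base + 1 + int (prod_encode (prod_encode (fst pq), prod_encode (snd pq)))" for pq
  define G where "G = {..<M} \<times> {..<n}"
  have inj: "inj code" unfolding inj_def code_def by (simp add: prod_eq_iff)
  define P where "P i k = {(p, q). p \<in> G \<and> q \<in> G \<and> (p = (i, k) \<or> q = (i, k)) \<and>
      (p = q \<or> fst p \<noteq> fst q)}" for i k
  define T where "T i k = code ` P i k" for i k
  have above: "d < code pq" if "d \<in> insert 0 D" for d pq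
  proof -
    have "d \<le> base" using that assms by (simp add: base_def)
    then show ?thesis by (simp add: code_def)
  qed
  have "finite (T i k)" for i k
    unfolding T_def P_def by (rule finite_imageI, rule finite_subset[of _ "G \<times> G"]) (auto simp: G_def)
  moreover have "T i k \<subseteq> {0<..}" for i k
    unfolding T_def using above[of 0] by auto
  moreover have "T i k \<inter> D = {}" for i k
  proof -
    have "code pq \<notin> D" for pq using above[of "code pq" pq] by auto
    then show ?thesis unfolding T_def by blast
  qed
  moreover have "T i k \<noteq> {}" if "i < M" "k < n" for i k
  proof -
    have "((i, k), (i, k)) \<in> P i k" using that by (simp add: P_def G_def)
    then show ?thesis by (auto simp: T_def)
  qed
  moreover have "T i k \<inter> T i k' = {}" if "k \<noteq> k'" for i k k'
  proof -
    have "P i k \<inter> P i k' = {}"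
    proof (rule equals0I)
      fix pq assume "pq \<in> P i k \<inter> P i k'"
      then obtain p q where "pq = (p, q)" "p = (i, k) \<or> q = (i, k)" "p = (i, k') \<or> q = (i, k')"
        "p = q \<or> fst p \<noteq> fst q"
        unfolding P_def by blast
      then show False using that by auto
    qed
    then show ?thesis unfolding T_def image_Int[OF inj, symmetric] by simp
  qed
  moreover have "T i k \<inter> T i' k' \<noteq> {}" if "i < M" "i' < M" "k < n" "k' < n" "i \<noteq> i'" for i k i' k'
  proof -
    have "((i, k), (i', k')) \<in> P i k \<inter> P i' k'" using that by (simp add: P_def G_def)
    then show ?thesis unfolding T_def image_Int[OF inj, symmetric] by blast
  qed
  ultimately show ?thesis unfolding separating_tags_def by blast
qed

section \<open>The separating model\<close>

locale separating_model =
  fixes L :: "(('p, 'a, 'v) assn \<times> 'a list) list"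
    and n :: nat and h :: heap and hs :: "heap list" and T :: "nat \<Rightarrow> nat \<Rightarrow> int set"
  assumes two_le_n: "2 \<le> n"
    and rows_short: "\<And>i. i < length L \<Longrightarrow> length (snd (L ! i)) \<le> n"
    and h_Heap: "h \<in> Heap"
    and hs_le_h: "\<And>i. i < length L \<Longrightarrow> hs ! i \<subseteq>\<^sub>m h"
    and tags: "separating_tags (length L) n (dom h) T"
begin

definition U :: "int set" where
  "U = (\<Union>i<length L. dom (hs ! i))"

definition B :: heap where
  "B = h |` U"

definition A :: "int set" where
  "A = (\<Union>i<length L. \<Union>k<n. T i k)"

definition B0 :: heap where
  "B0 = (\<lambda>x. if x \<in> A then Some 0 else B x)"

definition H :: "heap list" where
  "H = B0 # replicate (n - 1) B"

definition piece_addrs :: "nat \<Rightarrow> nat \<Rightarrow> nat \<Rightarrow> int set" where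
  "piece_addrs i k c = (if c = k then U - dom (hs ! i) else {}) \<union> (if c = 0 then T i k else {})"

definition piece :: "nat \<Rightarrow> nat \<Rightarrow> heap list" where
  "piece i k = restrict_tuple H (piece_addrs i k)"

definition var_rel :: "'a \<Rightarrow> heap list set" where
  "var_rel a = {G \<in> Heapn n. \<exists>i<length L. \<exists>k<length (snd (L ! i)).
     snd (L ! i) ! k = a \<and> tup_le (piece i k) G}"

lemma tags_finite: "finite (T i k)"
  and tags_pos: "T i k \<subseteq> {0<..}"
  and tags_fresh: "T i k \<inter> dom h = {}"
  and tags_nonempty: "i < length L \<Longrightarrow> k < n \<Longrightarrow> T i k \<noteq> {}"
  and tags_row_disjoint: "k \<noteq> k' \<Longrightarrow> T i k \<inter> T i k' = {}"
  and tags_cross: "i < length L \<Longrightarrow> i' < length L \<Longrightarrow> k < n \<Longrightarrow> k' < n \<Longrightarrow> i \<noteq> i' \<Longrightarrow>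
      T i k \<inter> T i' k' \<noteq> {}"
  using tags unfolding separating_tags_def by simp_all

lemma tags_sub_A: "i < length L \<Longrightarrow> k < n \<Longrightarrow> T i k \<subseteq> A"
  by (auto simp: A_def)

lemma U_dom_h: "U \<subseteq> dom h"
proof
  fix x assume "x \<in> U"
  then obtain i where "i < length L" "x \<in> dom (hs ! i)" by (auto simp: U_def)
  then show "x \<in> dom h" using hs_le_h map_le_implies_dom_le by blast
qed

lemma dom_B: "dom B = U"
  using U_dom_h by (auto simp: B_def)

lemma A_U_disjoint: "A \<inter> U = {}"
  using tags_fresh U_dom_h unfolding A_def by blast

lemma hs_le_B: assumes "i < length L" shows "hs ! i \<subseteq>\<^sub>m B"
  unfolding map_le_def
proof
  fix x assume x: "x \<in> dom (hs ! i)"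
  then have "x \<in> U" using assms by (auto simp: U_def)
  moreover have "(hs ! i) x = h x" using hs_le_h[OF assms] x unfolding map_le_def by blast
  ultimately show "(hs ! i) x = B x" by (simp add: B_def)
qed

lemma B_le_h: "B \<subseteq>\<^sub>m h"
  by (simp add: B_def map_le_def)

lemma length_H [simp]: "length H = n"
  using two_le_n by (simp add: H_def)

lemma H_nth: "c < n \<Longrightarrow> H ! c = (if c = 0 then B0 else B)"
  by (cases c) (simp_all add: H_def)

lemma B_le_B0: "B \<subseteq>\<^sub>m B0"
  unfolding map_le_def
proof
  fix x assume "x \<in> dom B"
  then have "x \<notin> A" using A_U_disjoint dom_B by blast
  then show "B x = B0 x" by (simp add: B0_def)
qed

lemma B_le_H: "c < n \<Longrightarrow> B \<subseteq>\<^sub>m H ! c"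
  by (simp add: H_nth B_le_B0)

lemma H_Heapn: "H \<in> Heapn n"
proof -
  have B: "B \<in> Heap" using h_Heap by (simp add: B_def Heap_restrict)
  have "dom B0 = A \<union> dom B" by (auto simp: B0_def)
  moreover have "finite A" by (simp add: A_def tags_finite)
  moreover have "A \<subseteq> {0<..}" using tags_pos by (auto simp: A_def)
  ultimately have "B0 \<in> Heap" using B by (simp add: Heap_def)
  with B show ?thesis by (simp add: Heapn_iff H_nth)
qed

lemma piece_Heapn: "piece i k \<in> Heapn n"
  unfolding piece_def by (rule restrict_tuple_Heapn[OF H_Heapn])

lemma length_piece [simp]: "length (piece i k) = n"
  by (simp add: piece_def)

lemma var_rel_IRel: "var_rel a \<in> IRel n"
  unfolding IRel_def
proof (intro CollectI conjI ballI impI)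
  show "var_rel a \<subseteq> Heapn n" by (auto simp: var_rel_def)
  fix f g assume "f \<in> var_rel a" "g \<in> Heapn n" "tup_le f g"
  then show "g \<in> var_rel a" unfolding var_rel_def using tup_le_trans by blast
qed

lemma hs_piece_disjoint:
  assumes "i < length L" and "k < n"
  shows "dom (hs ! i) \<inter> piece_addrs i k c = {}"
proof -
  have "dom (hs ! i) \<subseteq> U" using assms(1) by (auto simp: U_def)
  then show ?thesis
    using A_U_disjoint tags_sub_A[OF assms] by (auto simp: piece_addrs_def)
qed

text \<open>Carving out the pieces of row \<open>i\<close> leaves a model of \<open>\<phi>\<^sub>i\<close>, since \<open>hs ! i\<close> survives.\<close>
lemma H_models_row:
  assumes i: "i < length L" and free: "avars (fst (L ! i)) = {}"
    and model: "hs ! i \<in> sem1 I \<eta> (fst (L ! i))"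
  shows "H \<in> sem I n \<eta> var_rel (star_chain (fst (L ! i)) (snd (L ! i)))"
proof (rule star_chain_build[where S = "piece_addrs i"])
  let ?as = "snd (L ! i)"
  have short: "k < length ?as \<Longrightarrow> k < n" for k using rows_short[OF i] by simp
  show "piece_addrs i k c \<inter> piece_addrs i k' c = {}"
    if k: "k < length ?as" "k' < length ?as" and "k \<noteq> k'" for k k' c
  proof -
    have "T i k \<inter> T i k' = {}" using tags_row_disjoint[OF \<open>k \<noteq> k'\<close>] .
    moreover have "T i k \<inter> U = {}" and "T i k' \<inter> U = {}"
      using A_U_disjoint tags_sub_A[OF i short] k by blast+
    ultimately show ?thesis using \<open>k \<noteq> k'\<close> by (auto simp: piece_addrs_def)
  qed
  show "restrict_tuple H (piece_addrs i k) \<in> var_rel (?as ! k)" if "k < length ?as" for k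
    using i that piece_Heapn tup_le_refl unfolding var_rel_def piece_def by blast
  show "restrict_tuple H (\<lambda>c. - (\<Union>k<length ?as. piece_addrs i k c)) \<in> sem I n \<eta> var_rel (fst (L ! i))"
  proof (rule sem_lift[OF _ free])
    show "\<forall>a. var_rel a \<in> IRel n" by (simp add: var_rel_IRel)
    show "[hs ! i] \<in> sem I 1 \<eta> (\<lambda>_. {}) (fst (L ! i))" using model by (simp add: sem1_def)
    show "restrict_tuple H (\<lambda>c. - (\<Union>k<length ?as. piece_addrs i k c)) \<in> Heapn n"
      using H_Heapn by (rule restrict_tuple_Heapn)
    show "\<forall>c<n. hs ! i \<subseteq>\<^sub>m restrict_tuple H (\<lambda>c. - (\<Union>k<length ?as. piece_addrs i k c)) ! c"
    proof (intro allI impI)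
      fix c assume c: "c < n"
      have "dom (hs ! i) \<inter> (\<Union>k<length ?as. piece_addrs i k c) = {}"
        using hs_piece_disjoint[OF i short] by blast
      then have "hs ! i \<subseteq>\<^sub>m (H ! c) |` (- (\<Union>k<length ?as. piece_addrs i k c))"
        using map_le_restrict_compl map_le_trans[OF hs_le_B[OF i] B_le_H[OF c]] by blast
      then show "hs ! i \<subseteq>\<^sub>m restrict_tuple H (\<lambda>c. - (\<Union>k<length ?as. piece_addrs i k c)) ! c"
        using c by simp
    qed
  qed
qed

lemma H_models_lhs:
  assumes "L \<noteq> []"
    and "\<And>i. i < length L \<Longrightarrow> avars (fst (L ! i)) = {} \<and> hs ! i \<in> sem1 I \<eta> (fst (L ! i))"
  shows "H \<in> sem I n \<eta> var_rel (canon_lhs L)"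
proof -
  have "H \<in> sem I n \<eta> var_rel x" if "x \<in> set (map (\<lambda>(\<phi>, as). star_chain \<phi> as) L)" for x
  proof -
    from that obtain i where "i < length L" and "x = star_chain (fst (L ! i)) (snd (L ! i))"
      by (auto simp: in_set_conv_nth split_beta)
    then show ?thesis using H_models_row assms(2) by blast
  qed
  then show ?thesis using assms(1) by (simp add: canon_lhs_def sem_big_and)
qed

lemma tags_in_piece:
  assumes "i < length L" and "k < n" shows "T i k \<subseteq> dom (piece i k ! 0)"
proof
  fix x assume "x \<in> T i k"
  then have "x \<in> A" and "x \<in> piece_addrs i k 0"
    using tags_sub_A[OF assms] by (auto simp: piece_addrs_def)
  then show "x \<in> dom (piece i k ! 0)"
    using two_le_n by (simp add: piece_def H_nth B0_def dom_def)
qed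

text \<open>Disjoint tuples above two pieces: the tags force the pieces to come from the same
  row and from different positions in it.\<close>
lemma separated_pieces:
  assumes i: "i < length L" "i' < length L" and k: "k < n" "k' < n"
    and "tup_le (piece i k) G" and "tup_le (piece i' k') G'" and "tuple_disjoint G G'"
  shows "i = i' \<and> k \<noteq> k'"
proof -
  have "tuple_disjoint (piece i k) (piece i' k')"
    using tuple_disjoint_mono assms(5-7) .
  then have "dom (piece i k ! 0) \<inter> dom (piece i' k' ! 0) = {}"
    using two_le_n by (simp add: tuple_disjoint_def piece_def)
  then have disj: "T i k \<inter> T i' k' = {}"
    using tags_in_piece[OF i(1) k(1)] tags_in_piece[OF i(2) k(2)] by blast
  then have "i = i'" using tags_cross[OF i k] by blast
  moreover have "k \<noteq> k'" using disj tags_nonempty[OF i(1) k(1)] \<open>i = i'\<close> by auto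
  ultimately show ?thesis by blast
qed

text \<open>Component 1 of \<open>H\<close> carries no tags, so meets of tuples below \<open>H\<close> lie in \<open>B\<close>.\<close>
lemma meet_below_B:
  assumes "tup_le F H" shows "tuple_meet n F \<subseteq>\<^sub>m B"
proof -
  have "length F = n" using assms by (simp add: tup_le_def)
  then have "F ! 1 \<subseteq>\<^sub>m H ! 1" using tup_le_nth[OF assms, of 1] two_le_n by simp
  then have "F ! 1 \<subseteq>\<^sub>m B" using two_le_n by (simp add: H_nth)
  then show ?thesis using tuple_meet_le[of 1 n F] two_le_n map_le_trans by auto
qed

text \<open>The common part of a tuple below \<open>H\<close> that is disjoint from a piece of row \<open>i\<close> lies
  inside \<open>hs ! i\<close>: the piece occupies the rest of \<open>U\<close> in one component.\<close>
lemma meet_below_row: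
  assumes F: "tup_le F H" and FG: "tuple_disjoint F G" and P: "tup_le (piece i k) G"
    and i: "i < length L" and k: "k < n"
  shows "tuple_meet n F \<subseteq>\<^sub>m hs ! i"
  unfolding map_le_def
proof
  fix x assume x: "x \<in> dom (tuple_meet n F)"
  have mB: "tuple_meet n F \<subseteq>\<^sub>m B" using meet_below_B[OF F] .
  then have xU: "x \<in> U" and mx: "tuple_meet n F x = h x"
    using x dom_B map_le_implies_dom_le[OF mB] by (auto simp: map_le_def B_def)
  have xF: "x \<in> dom (F ! k)" using tuple_meet_le[OF k] x map_le_implies_dom_le by blast
  have "x \<in> dom (hs ! i)"
  proof (rule ccontr)
    assume "x \<notin> dom (hs ! i)"
    then have "x \<in> piece_addrs i k k" using xU by (simp add: piece_addrs_def)
    moreover have "x \<in> dom (H ! k)" using xU dom_B map_le_implies_dom_le[OF B_le_H[OF k]] by blast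
    ultimately have "x \<in> dom (piece i k ! k)" using k by (simp add: piece_def)
    moreover have "piece i k ! k \<subseteq>\<^sub>m G ! k" using tup_le_nth[OF P] k by simp
    ultimately have "x \<in> dom (G ! k)" using map_le_implies_dom_le by blast
    moreover have "dom (F ! k) \<inter> dom (G ! k) = {}"
      using FG k tup_le_def[of F H] F by (simp add: tuple_disjoint_def)
    ultimately show False using xF by blast
  qed
  then show "tuple_meet n F x = (hs ! i) x"
    using mx hs_le_h[OF i] unfolding map_le_def by simp
qed

lemma matched_pieces:
  assumes bs: "bs \<noteq> []"
    and rel: "\<And>l. l < length bs \<Longrightarrow> Gs ! l \<in> var_rel (bs ! l)"
    and disj: "\<And>l l'. l < length bs \<Longrightarrow> l' < length bs \<Longrightarrow> l \<noteq> l' \<Longrightarrow>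
      tuple_disjoint (Gs ! l) (Gs ! l')"
  obtains i pos where "i < length L" and "inj_on pos {..<length bs}"
    and "\<And>l. l < length bs \<Longrightarrow> pos l < length (snd (L ! i)) \<and> snd (L ! i) ! pos l = bs ! l \<and>
      tup_le (piece i (pos l)) (Gs ! l)"
proof -
  define matches where "matches l ik \<longleftrightarrow> fst ik < length L \<and> snd ik < length (snd (L ! fst ik)) \<and>
    snd (L ! fst ik) ! snd ik = bs ! l \<and> tup_le (piece (fst ik) (snd ik)) (Gs ! l)" for l ik
  have "\<forall>l\<in>{..<length bs}. \<exists>ik. matches l ik"
    using rel unfolding var_rel_def matches_def by fastforce
  then obtain ik where ik: "\<And>l. l < length bs \<Longrightarrow> matches l (ik l)"
    using bchoice[of "{..<length bs}" matches] by auto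
  have short: "snd (ik l) < n" if "l < length bs" for l
    using ik[OF that] rows_short unfolding matches_def by fastforce
  have separated: "fst (ik l) = fst (ik l') \<and> snd (ik l) \<noteq> snd (ik l')"
    if "l < length bs" "l' < length bs" "l \<noteq> l'" for l l'
    using separated_pieces[OF _ _ short short _ _ disj] ik that unfolding matches_def by blast
  define i where "i = fst (ik 0)"
  have row: "fst (ik l) = i" if "l < length bs" for l
    using separated[OF that, of 0] bs by (cases "l = 0") (auto simp: i_def)
  show thesis
  proof (rule that[of i "\<lambda>l. snd (ik l)"])
    show "i < length L" using ik[of 0] bs unfolding matches_def i_def by simp
    show "inj_on (\<lambda>l. snd (ik l)) {..<length bs}"
      using separated by (auto intro: inj_onI)
    show "snd (ik l) < length (snd (L ! i)) \<and> snd (L ! i) ! snd (ik l) = bs ! l \<and>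
        tup_le (piece i (snd (ik l))) (Gs ! l)" if "l < length bs" for l
      using ik[OF that] row[OF that] unfolding matches_def by simp
  qed
qed

lemma H_models_rhs:
  assumes free: "avars \<psi> = {}" and H: "H \<in> sem I n \<eta> var_rel (star_chain \<psi> bs)"
  shows "if bs = [] then h \<in> sem1 I \<eta> \<psi>
    else \<exists>i<length L. hs ! i \<in> sem1 I \<eta> \<psi> \<and> dominates L (snd (L ! i)) bs"
proof -
  have rel: "\<forall>a. var_rel a \<in> IRel n" by (simp add: var_rel_IRel)
  obtain F Gs where F: "F \<in> sem I n \<eta> var_rel \<psi>" "tup_le F H" and len: "length Gs = length bs"
    and Gs: "\<forall>l<length bs. Gs ! l \<in> var_rel (bs ! l) \<and> tup_le (Gs ! l) H \<and> tuple_disjoint F (Gs ! l)"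
    and Gs_disj: "\<forall>l<length bs. \<forall>l'<length bs. l \<noteq> l' \<longrightarrow> tuple_disjoint (Gs ! l) (Gs ! l')"
    using star_chain_decompose[OF rel H] by blast
  have meet: "[tuple_meet n F] \<in> sem I 1 \<eta> (\<lambda>_. {}) \<psi>"
    using sem_tuple_meet[OF _ rel free F(1)] two_le_n by simp
  show ?thesis
  proof (cases "bs = []")
    case True
    have "h \<in> sem1 I \<eta> \<psi>"
      using sem1_upward[OF meet map_le_trans[OF meet_below_B[OF F(2)] B_le_h] h_Heap] .
    with True show ?thesis by simp
  next
    case False
    obtain i pos where i: "i < length L" and inj: "inj_on pos {..<length bs}"
      and pos: "\<And>l. l < length bs \<Longrightarrow> pos l < length (snd (L ! i)) \<and> snd (L ! i) ! pos l = bs ! l \<and>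
        tup_le (piece i (pos l)) (Gs ! l)"
      using matched_pieces[OF False, of Gs] Gs Gs_disj by blast
    have first: "0 < length bs" using False by simp
    have "pos 0 < n" using pos[OF first] rows_short[OF i] by simp
    then have "tuple_meet n F \<subseteq>\<^sub>m hs ! i"
      using meet_below_row[OF F(2) _ _ i] Gs pos[OF first] first by blast
    moreover have "hs ! i \<in> Heap" using Heap_map_le[OF hs_le_h[OF i] h_Heap] .
    ultimately have "hs ! i \<in> sem1 I \<eta> \<psi>" using sem1_upward[OF meet] by blast
    moreover have "dominates L (snd (L ! i)) bs"
      unfolding dominates_def using occ_le_of_injection[OF inj] pos by blast
    ultimately show ?thesis using False i by auto
  qed
qed

end

lemma canonical_lhs_free: "canonical L R \<Longrightarrow> i < length L \<Longrightarrow> avars (fst (L ! i)) = {}"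
  and canonical_rhs_free: "canonical L R \<Longrightarrow> j < length R \<Longrightarrow> avars (fst (R ! j)) = {}"
  unfolding canonical_def by (auto dest!: nth_mem simp: split_beta)

lemma sem_canon_rhs:
  "X \<in> sem I n \<eta> \<rho> (canon_rhs R) \<longleftrightarrow>
    (\<exists>j<length R. X \<in> sem I n \<eta> \<rho> (star_chain (fst (R ! j)) (snd (R ! j))))"
proof -
  have "(\<exists>x\<in>set R. P x) \<longleftrightarrow> (\<exists>j<length R. P (R ! j))" for P :: "_ \<Rightarrow> bool"
    by (metis in_set_conv_nth)
  then show ?thesis unfolding canon_rhs_def sem_big_or by (simp add: split_beta)
qed

theorem mainTheorem9:
  fixes I :: "'p \<Rightarrow> ('v \<Rightarrow> int) \<Rightarrow> heap set"
    and \<eta> :: "'v \<Rightarrow> int"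
    and L R :: "(('p, 'a, 'v) assn \<times> 'a list) list"
    and n :: nat
  assumes "canonical L R"
    and "2 \<le> n"
    and "\<forall>(\<phi>, as)\<in>set L. length as \<le> n"
    and "valid I n \<eta> (canon_lhs L) (canon_rhs R)"
  shows "parametricity_condition I \<eta> L R"
  unfolding parametricity_condition_def
proof (intro ballI allI impI)
  fix h hs
  assume h: "h \<in> Heap" and hs: "length hs = length L \<and> set hs \<subseteq> Heap \<and>
    (\<forall>i<length L. hs ! i \<subseteq>\<^sub>m h \<and> hs ! i \<in> sem1 I \<eta> (fst (L ! i)))"
  have "finite (dom h)" using h by (simp add: Heap_def)
  then obtain T where "separating_tags (length L) n (dom h) T"
    using separating_tags_exist by blast
  then interpret separating_model L n h hs T
    using assms(2,3) h hs by unfold_locales (auto dest!: nth_mem simp: split_beta)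
  have "L \<noteq> []" using assms(1) by (simp add: canonical_def)
  moreover have "avars (fst (L ! i)) = {} \<and> hs ! i \<in> sem1 I \<eta> (fst (L ! i))" if "i < length L" for i
    using canonical_lhs_free[OF assms(1) that] hs that by blast
  ultimately have "H \<in> sem I n \<eta> var_rel (canon_lhs L)" by (rule H_models_lhs)
  then have "H \<in> sem I n \<eta> var_rel (canon_rhs R)"
    using assms(4) var_rel_IRel by (auto simp: valid_def)
  then obtain j where j: "j < length R" "H \<in> sem I n \<eta> var_rel (star_chain (fst (R ! j)) (snd (R ! j)))"
    by (auto simp: sem_canon_rhs)
  then show "(\<exists>i<length L. \<exists>j<length R. hs ! i \<in> sem1 I \<eta> (fst (R ! j)) \<and>
        dominates L (snd (L ! i)) (snd (R ! j)))
      \<or> (\<exists>j<length R. snd (R ! j) = [] \<and> h \<in> sem1 I \<eta> (fst (R ! j)))"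
    using H_models_rhs[OF canonical_rhs_free[OF assms(1) j(1)] j(2)] by (auto split: if_splits)
qed

end
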